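(* Let $\Sigma$ be an alphabet with at least two letters, $k\ge1$, and $f\colon(\Sigma^* )^k\to\Sigma^*$ RCP. Then there exist $p_{f,1},\ldots,p_{f,k},e_f\in\mathbb{N}$ such that for all $x_1,\ldots,x_k\in\Sigma^*$ and all $a\in\Sigma$, $$|f(x_1,\ldots,x_k)|=p_{f,1}|x_1|+\cdots+p_{f,k}|x_k|+e_f,$$ $$|f(x_1,\ldots,x_k)|_a=p_{f,1}|x_1|_a+\cdots+p_{f,k}|x_k|_a+|f(\varepsilon,\ldots,\varepsilon)|_a,$$ where $e_f=|f(\varepsilon,\ldots,\varepsilon)|$ and $p_{f,i}=|f(\varepsilon,\ldots,\varepsilon,c,\varepsilon,\ldots,\varepsilon)|-|f(\varepsilon,\ldots,\varepsilon)|$ with the letter $c\in\Sigma$ in the $i$-th position (this value being independent of the choice of $c$).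
   Context: $\Sigma^*$ is the free monoid over $\Sigma$ (finite words, concatenation, empty word $\varepsilon$); $|u|$ is the length of $u$ and $|u|_a$ the number of occurrences of the letter $a$ in $u$. A function $f\colon(\Sigma^* )^k\to\Sigma^*$ is RCP if for every monoid morphism $\varphi\colon\Sigma^*\to\Sigma^*$ and all $u_1,\ldots,u_k,v_1,\ldots,v_k$ with $\varphi(u_i)=\varphi(v_i)$ for all $i$, we have $\varphi(f(u_1,\ldots,u_k))=\varphi(f(v_1,\ldots,v_k))$. *)

theory Defs
  imports Main
begin

definition monoid_morphism :: "('a list \<Rightarrow> 'a list) \<Rightarrow> bool" where
  "monoid_morphism \<phi> \<longleftrightarrow> \<phi> [] = [] \<and> (\<forall>u v. \<phi> (u @ v) = \<phi> u @ \<phi> v)"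

text \<open>A k-ary function on words is represented as a function on lists of words;
  only arguments of length k matter. RCP = respects all morphism-induced congruences.\<close>
definition RCP :: "nat \<Rightarrow> ('a list list \<Rightarrow> 'a list) \<Rightarrow> bool" where
  "RCP k f \<longleftrightarrow> (\<forall>\<phi>. monoid_morphism \<phi> \<longrightarrow>
     (\<forall>us vs. length us = k \<longrightarrow> length vs = k \<longrightarrow>
        (\<forall>i<k. \<phi> (us ! i) = \<phi> (vs ! i)) \<longrightarrow> \<phi> (f us) = \<phi> (f vs)))"

end

theory Submission
  imports Defs
begin

text \<open>For a weight \<open>g : \<Sigma> \<rightarrow> \<nat>\<close>, the morphism \<open>x \<mapsto> c\<^bsup>g x\<^esup>\<close> only remembers
  \<open>g\<close>-weights, so RCP makes the \<open>g\<close>-weight of \<open>f(x\<^sub>1,\<dots>,x\<^sub>k)\<close> a function of the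
  \<open>g\<close>-weights of the \<open>x\<^sub>i\<close>. With \<open>g\<close> the indicator of a letter \<open>a\<close>, the number of
  \<open>a\<close>'s in \<open>f(x)\<close> is a function \<open>F\<^sub>a\<close> of the vector \<open>(|x\<^sub>i|\<^sub>a)\<^sub>i\<close>. With \<open>g\<close> the
  indicator of two letters \<open>a \<noteq> b\<close>, the arguments \<open>a\<^bsup>n\<^sub>i\<^esup>b\<^bsup>m\<^sub>i\<^esup>\<close> and \<open>a\<^bsup>n\<^sub>i+m\<^sub>i\<^esup>\<close>
  are indistinguishable, which gives \<open>F\<^sub>a(n) + F\<^sub>b(m) = F\<^sub>a(n+m) + F\<^sub>b(0)\<close>. Hence
  \<open>F\<^sub>a - F\<^sub>a(0)\<close> is additive and does not depend on \<open>a\<close>; being bounded below by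
  \<open>-F\<^sub>a(0)\<close>, it is a linear form with natural coefficients. Summing the letter counts
  over the finite alphabet gives the length formula.\<close>

lemma monoid_morphism_concat_map: "monoid_morphism (\<lambda>u. concat (map h u))"
  unfolding monoid_morphism_def by simp

lemma concat_map_replicate:
  "concat (map (\<lambda>x. replicate (g x) c) u) = replicate (sum_list (map g u)) c"
  by (induction u) (auto simp: replicate_add)

lemma RCP_weight_invariant:
  fixes g :: "'a \<Rightarrow> nat"
  assumes "RCP k f" "length xs = k" "length ys = k"
    and "\<And>i. i < k \<Longrightarrow> sum_list (map g (xs ! i)) = sum_list (map g (ys ! i))"
  shows "sum_list (map g (f xs)) = sum_list (map g (f ys))"
proof -
  define \<phi> :: "'a list \<Rightarrow> 'a list" where "\<phi> u = concat (map (\<lambda>x. replicate (g x) undefined) u)" for u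
  have \<phi>: "\<phi> u = replicate (sum_list (map g u)) undefined" for u
    unfolding \<phi>_def by (rule concat_map_replicate)
  have "monoid_morphism \<phi>"
    unfolding \<phi>_def by (rule monoid_morphism_concat_map)
  moreover have "\<forall>i<k. \<phi> (xs ! i) = \<phi> (ys ! i)"
    using assms(4) by (simp add: \<phi>)
  ultimately have "\<phi> (f xs) = \<phi> (f ys)"
    using assms(1-3) unfolding RCP_def by blast
  then show ?thesis
    by (simp add: \<phi>)
qed

lemma count_list_eq_sum_list:
  "count_list u a = sum_list (map (\<lambda>x. if x = a then 1 else 0) u)"
  by (induction u) auto

lemma count_list_add_eq_sum_list:
  "a \<noteq> b \<Longrightarrow> count_list u a + count_list u b = sum_list (map (\<lambda>x. if x = a \<or> x = b then 1 else 0) u)"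
  by (induction u) auto

lemma count_list_replicate [simp]: "count_list (replicate n x) y = (if x = y then n else 0)"
  by (induction n) auto

lemma length_eq_sum_count_list: "length (w :: 'a::finite list) = (\<Sum>a\<in>UNIV. count_list w a)"
  by (simp add: sum_count_set)

lemma length_linear_if_count_list_linear:
  fixes w w0 :: "'a::finite list"
  assumes "\<And>a. count_list w a = (\<Sum>i<k. p i * count_list (xs ! i) a) + count_list w0 a"
  shows "length w = (\<Sum>i<k. p i * length (xs ! i)) + length w0"
proof -
  have "length w = (\<Sum>a\<in>UNIV. \<Sum>i<k. p i * count_list (xs ! i) a) + (\<Sum>a\<in>UNIV. count_list w0 a)"
    by (simp add: length_eq_sum_count_list[of w] assms sum.distrib)
  also have "(\<Sum>a\<in>UNIV. \<Sum>i<k. p i * count_list (xs ! i) a) = (\<Sum>i<k. p i * length (xs ! i))"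
    unfolding length_eq_sum_count_list[of "xs ! _"] sum_distrib_left by (rule sum.swap)
  finally show ?thesis
    by (simp add: length_eq_sum_count_list)
qed

lemma sum_mult_length_single_letter_tuple:
  assumes "i < k"
  shows "(\<Sum>j<k. p j * length ((replicate k [])[i := [c]] ! j)) = p i"
proof -
  have "(\<Sum>j<k. p j * length ((replicate k [])[i := [c]] ! j)) = (\<Sum>j<k. if j = i then p i else 0)"
    by (rule sum.cong) (auto simp: nth_list_update)
  then show ?thesis
    using assms by simp
qed

context
  fixes D :: "(nat \<Rightarrow> nat) \<Rightarrow> 'b::ring_1"
  assumes additive: "\<And>n m. D (\<lambda>i. n i + m i) = D n + D m"
begin

lemma additive_zero: "D (\<lambda>_. 0) = 0"
  using additive[of "\<lambda>_. 0" "\<lambda>_. 0"] by simp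

lemma additive_scale: "D (\<lambda>i. t * n i) = of_nat t * D n"
proof (induction t)
  case 0
  then show ?case by (simp add: additive_zero)
next
  case (Suc t)
  have "D (\<lambda>i. Suc t * n i) = D (\<lambda>i. t * n i) + D n"
    by (simp add: additive[symmetric] add.commute)
  then show ?case
    by (simp add: Suc algebra_simps)
qed

lemma additive_linear:
  "D (\<lambda>i. if i < k then n i else 0) = (\<Sum>i<k. of_nat (n i) * D (\<lambda>j. if j = i then 1 else 0))"
proof (induction k)
  case 0
  then show ?case by (simp add: additive_zero)
next
  case (Suc k)
  have "(\<lambda>i. if i < Suc k then n i else 0)
      = (\<lambda>i. (if i < k then n i else 0) + n k * (if i = k then 1 else 0))"
    by (auto simp: fun_eq_iff less_Suc_eq)
  then show ?case
    by (simp add: additive additive_scale Suc)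
qed

end

lemma additive_bounded_below_nonneg:
  fixes D :: "(nat \<Rightarrow> nat) \<Rightarrow> int"
  assumes additive: "\<And>n m. D (\<lambda>i. n i + m i) = D n + D m"
    and bounded: "\<And>n. D n \<ge> - c"
  shows "D n \<ge> 0"
proof (rule ccontr)
  assume "\<not> D n \<ge> 0"
  define t where "t = nat c + 1"
  have "int t * D n \<le> int t * (- 1)"
    using \<open>\<not> D n \<ge> 0\<close> by (intro mult_left_mono) auto
  also have "\<dots> < - c"
    unfolding t_def by simp
  finally have "D (\<lambda>i. t * n i) < - c"
    using additive_scale[of D, OF additive] by simp
  with bounded show False
    by (meson not_less)
qed

locale RCP_function =
  fixes f :: "'a list list \<Rightarrow> 'a list" and k :: nat
  assumes RCP: "RCP k f"
begin

definition profile :: "'a \<Rightarrow> (nat \<Rightarrow> nat) \<Rightarrow> nat" where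
  "profile a n = count_list (f (map (\<lambda>i. replicate (n i) a) [0..<k])) a"

definition increment :: "'a \<Rightarrow> (nat \<Rightarrow> nat) \<Rightarrow> int" where
  "increment a n = int (profile a n) - int (profile a (\<lambda>_. 0))"

lemma profile_cong:
  assumes "\<And>i. i < k \<Longrightarrow> n i = m i"
  shows "profile a n = profile a m"
proof -
  have "map (\<lambda>i. replicate (n i) a) [0..<k] = map (\<lambda>i. replicate (m i) a) [0..<k]"
    by (rule map_cong) (simp_all add: assms)
  then show ?thesis
    by (simp only: profile_def)
qed

lemma count_list_eq_profile:
  assumes "length xs = k"
  shows "count_list (f xs) a = profile a (\<lambda>i. count_list (xs ! i) a)"
  unfolding profile_def count_list_eq_sum_list
  by (rule RCP_weight_invariant[OF RCP assms]) (simp_all add: count_list_eq_sum_list[symmetric] sum_list_replicate)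

lemma profile_exchange:
  assumes "a \<noteq> b"
  shows "profile a n + profile b m = profile a (\<lambda>i. n i + m i) + profile b (\<lambda>_. 0)"
proof -
  let ?xs = "map (\<lambda>i. replicate (n i) a @ replicate (m i) b) [0..<k]"
  let ?ys = "map (\<lambda>i. replicate (n i + m i) a) [0..<k]"
  have "count_list (f ?xs) a + count_list (f ?xs) b = count_list (f ?ys) a + count_list (f ?ys) b"
    unfolding count_list_add_eq_sum_list[OF assms]
    by (rule RCP_weight_invariant[OF RCP])
      (use assms in \<open>simp_all add: count_list_add_eq_sum_list[OF assms, symmetric] sum_list_replicate\<close>)
  moreover have "count_list (f ?xs) a = profile a n" "count_list (f ?xs) b = profile b m"
    "count_list (f ?ys) a = profile a (\<lambda>i. n i + m i)" "count_list (f ?ys) b = profile b (\<lambda>_. 0)"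
    using assms by (auto simp: count_list_eq_profile intro!: profile_cong)
  ultimately show ?thesis
    by simp
qed

lemma increment_letter_independent: "a \<noteq> b \<Longrightarrow> increment a n = increment b n"
  using profile_exchange[of a b "\<lambda>_. 0" n] unfolding increment_def by simp

lemma increment_additive:
  "a \<noteq> b \<Longrightarrow> increment a (\<lambda>i. n i + m i) = increment a n + increment a m"
  using profile_exchange[of a b n m] increment_letter_independent[of a b m]
  unfolding increment_def by simp

lemma increment_unit_nonneg:
  assumes "a \<noteq> b"
  shows "increment a (\<lambda>j. if j = i then 1 else 0) \<ge> 0"
proof (rule additive_bounded_below_nonneg[of "increment a"])
  show "increment a (\<lambda>i. n i + m i) = increment a n + increment a m" for n m
    using increment_additive[OF assms] .
  show "increment a n \<ge> - int (profile a (\<lambda>_. 0))" for n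
    by (simp add: increment_def)
qed

lemma count_list_linear:
  assumes "a \<noteq> b" "length xs = k"
  shows "int (count_list (f xs) a) = int (count_list (f (replicate k [])) a)
    + (\<Sum>i<k. int (count_list (xs ! i) a) * increment a (\<lambda>j. if j = i then 1 else 0))"
proof -
  let ?n = "\<lambda>i. count_list (xs ! i) a"
  have "int (count_list (f xs) a) = int (profile a (\<lambda>_. 0)) + increment a (\<lambda>i. if i < k then ?n i else 0)"
    unfolding increment_def count_list_eq_profile[OF assms(2)] by (simp cong: profile_cong)
  also have "profile a (\<lambda>_. 0) = count_list (f (replicate k [])) a"
    by (simp add: count_list_eq_profile cong: profile_cong)
  also have "increment a (\<lambda>i. if i < k then ?n i else 0)
      = (\<Sum>i<k. int (?n i) * increment a (\<lambda>j. if j = i then 1 else 0))"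
    by (rule additive_linear[of "increment a", OF increment_additive[OF assms(1)]])
  finally show ?thesis .
qed

lemma count_list_linear_nat:
  fixes a0 b0 :: 'a
  assumes "a0 \<noteq> b0"
  obtains p where "\<And>xs a. length xs = k \<Longrightarrow>
    count_list (f xs) a = (\<Sum>i<k. p i * count_list (xs ! i) a) + count_list (f (replicate k [])) a"
proof -
  let ?unit = "\<lambda>i j. if j = i then 1 else 0"
  define p where "p i = nat (increment a0 (?unit i))" for i
  have "count_list (f xs) a = (\<Sum>i<k. p i * count_list (xs ! i) a) + count_list (f (replicate k [])) a"
    if xs: "length xs = k" for xs a
  proof -
    define b where "b = (if a = a0 then b0 else a0)"
    have "a \<noteq> b"
      using assms unfolding b_def by auto
    have "int (p i) = increment a (?unit i)" for i
      using increment_unit_nonneg[OF \<open>a \<noteq> b\<close>, of i] increment_letter_independent[of a a0 "?unit i"]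
      unfolding p_def by (cases "a = a0") auto
    then have "int (count_list (f xs) a)
        = int ((\<Sum>i<k. p i * count_list (xs ! i) a) + count_list (f (replicate k [])) a)"
      by (simp add: count_list_linear[OF \<open>a \<noteq> b\<close> xs] mult.commute)
    then show ?thesis
      by (rule of_nat_eq_iff[THEN iffD1])
  qed
  then show thesis
    by (rule that)
qed

end

theorem mainTheorem13:
  fixes f :: "('a::finite) list list \<Rightarrow> 'a list" and k :: nat
  assumes "card (UNIV :: 'a set) \<ge> 2" and "k \<ge> 1" and "RCP k f"
  shows "\<exists>(p :: nat \<Rightarrow> nat) (e :: nat).
     e = length (f (replicate k [])) \<and>
     (\<forall>i<k. \<forall>c. length (f ((replicate k [])[i := [c]])) = p i + e) \<and>
     (\<forall>xs. length xs = k \<longrightarrow>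
        length (f xs) = (\<Sum>i<k. p i * length (xs ! i)) + e \<and>
        (\<forall>a. count_list (f xs) a =
               (\<Sum>i<k. p i * count_list (xs ! i) a) + count_list (f (replicate k [])) a))"
proof -
  interpret RCP_function f k
    by unfold_locales (rule assms(3))
  obtain a0 b0 :: 'a where "a0 \<noteq> b0"
    using assms(1) card_le_Suc0_iff_eq[of "UNIV :: 'a set"] by auto
  then obtain p where count: "\<And>xs a. length xs = k \<Longrightarrow>
    count_list (f xs) a = (\<Sum>i<k. p i * count_list (xs ! i) a) + count_list (f (replicate k [])) a"
    using count_list_linear_nat by blast
  have length: "length (f xs) = (\<Sum>i<k. p i * length (xs ! i)) + length (f (replicate k []))"
    if "length xs = k" for xs
    by (rule length_linear_if_count_list_linear) (rule count[OF that])
  have "length (f ((replicate k [])[i := [c]])) = p i + length (f (replicate k []))"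
    if "i < k" for i c
    using length[of "(replicate k [])[i := [c]]"] that by (simp add: sum_mult_length_single_letter_tuple)
  with count length show ?thesis
    by blast
qed

end
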